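(* Let $P, Q \subseteq \mathbb{R}^d$ be semi-rational polytopes, each of codimension $0$ or $1$. Suppose that $L_{P+w}(s) = L_{Q+w}(s)$ for all integer vectors $w \in \mathbb{Z}^d$ and all real $s > 0$. Then $P = Q$.
   Context: For a polytope $P \subseteq \mathbb{R}^d$ and real $s \ge 0$, the real Ehrhart function is $L_P(s) = \#(sP \cap \mathbb{Z}^d)$, where $sP = \{sx : x \in P\}$. A polytope $P \subseteq \mathbb{R}^d$ is semi-rational if it can be written as $P = \bigcap_{i=1}^n \{x \in \mathbb{R}^d : \langle a_i, x\rangle \le b_i\}$ with all $a_i \in \mathbb{Z}^d$ and all $b_i \in \mathbb{R}$ arbitrary. *)

theory Defs
  imports "HOL-Analysis.Analysis"
begin

definition int_vec :: "real^'n \<Rightarrow> bool" where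
  "int_vec x \<longleftrightarrow> (\<forall>i. x $ i \<in> \<int>)"

definition ehrhart :: "(real^'n) set \<Rightarrow> real \<Rightarrow> nat" where
  "ehrhart P s = card {x \<in> (\<lambda>y. s *\<^sub>R y) ` P. int_vec x}"

definition semi_rational :: "(real^'n) set \<Rightarrow> bool" where
  "semi_rational P \<longleftrightarrow> polytope P \<and>
     (\<exists>F :: ((real^'n) \<times> real) set. finite F \<and> (\<forall>(a,b)\<in>F. int_vec a) \<and>
        P = {x. \<forall>(a,b)\<in>F. a \<bullet> x \<le> b})"

definition codim :: "(real^'n) set \<Rightarrow> int" where
  "codim P = int CARD('n) - aff_dim P"

end

theory Submission
  imports Defs
begin

text \<open>Call \<open>y = r v + z\<close> with \<open>v, z\<close> integral a point on a lattice line. For a large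
  integer \<open>M\<close> put \<open>w = M v - z\<close> and \<open>t = r + M\<close>; then \<open>(y + w) / t = v\<close>, and once
  \<open>t > R + |y|\<close> for \<open>P\<close> inside the ball of radius \<open>R\<close>, the set \<open>(P + w) / t\<close> lies within
  distance \<open>1\<close> of \<open>v\<close>, so \<open>v\<close> is its only possible lattice point. Hence the Ehrhart
  functions of the integral translates of \<open>P\<close> decide which such points lie in \<open>P\<close>. These
  points are dense in every affine subspace of codimension at most one (an integral point
  off a hyperplane projects the rational points centrally onto it), so a closed convex set
  of codimension at most one is the closure of the lattice-line points it contains.\<close>

lemma int_vec_diff: "int_vec u \<Longrightarrow> int_vec v \<Longrightarrow> int_vec (u - v)"
  by (simp add: int_vec_def)

lemma int_vec_scaleR_of_nat: "int_vec u \<Longrightarrow> int_vec (real m *\<^sub>R u)"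
  by (simp add: int_vec_def)

lemma int_vec_of_int: "int_vec (\<chi> i. real_of_int (f i))"
  by (simp add: int_vec_def)

lemma norm_ge_one_if_int_vec:
  assumes "int_vec u" "u \<noteq> 0"
  shows "norm u \<ge> 1"
proof -
  obtain i where "u $ i \<noteq> 0"
    using assms(2) by (metis vec_eq_iff zero_index)
  moreover have "u $ i \<in> \<int>"
    using assms(1) by (simp add: int_vec_def)
  ultimately have "\<bar>u $ i\<bar> \<ge> 1"
    by (metis Ints_nonzero_abs_ge1)
  then show ?thesis
    using component_le_norm_cart[of u i] by linarith
qed

definition lattice_lines :: "(real^'n) set" where
  "lattice_lines = {r *\<^sub>R v + z | r v z. int_vec v \<and> int_vec z}"

lemma lattice_lines_of_int:
  assumes "int_vec z"
  shows "z + a *\<^sub>R (\<chi> i. real_of_int (f i)) \<in> lattice_lines"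
  unfolding lattice_lines_def using assms int_vec_of_int[of f] add.commute by blast

lemma ehrhart_translate_point:
  fixes P :: "(real^'n) set"
  assumes R: "\<forall>p\<in>P. norm p \<le> R" and v: "int_vec v"
    and t: "t > 0" "t > R + norm y" and yw: "y + w = t *\<^sub>R v"
  shows "ehrhart ((\<lambda>x. x + w) ` P) (1/t) = (if y \<in> P then 1 else 0)"
proof -
  have "{x \<in> (\<lambda>y. (1/t) *\<^sub>R y) ` (\<lambda>x. x + w) ` P. int_vec x} = (if y \<in> P then {v} else {})"
  proof (intro equalityI subsetI)
    fix x assume "x \<in> {x \<in> (\<lambda>y. (1/t) *\<^sub>R y) ` (\<lambda>x. x + w) ` P. int_vec x}"
    then obtain p where p: "p \<in> P" "x = (1/t) *\<^sub>R (p + w)" and x: "int_vec x"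
      by auto
    have p_eq: "p - y = t *\<^sub>R (x - v)"
      using p(2) yw t by (simp add: algebra_simps)
    have "x = v"
    proof (rule ccontr)
      assume "x \<noteq> v"
      then have "t \<le> t * norm (x - v)"
        using norm_ge_one_if_int_vec[OF int_vec_diff[OF x v]] t(1) by simp
      also have "\<dots> = norm (p - y)"
        using p_eq t(1) by simp
      also have "\<dots> \<le> R + norm y"
        using R p(1) norm_triangle_ineq4[of p y] by (meson add_right_mono order_trans)
      finally show False
        using t(2) by simp
    qed
    moreover from this have "p = y"
      using p_eq by simp
    ultimately show "x \<in> (if y \<in> P then {v} else {})"
      using p(1) by simp
  next
    fix x assume "x \<in> (if y \<in> P then {v} else {})"
    then have "y \<in> P" "x = v"
      by (simp_all split: if_splits)
    moreover have "v = (1/t) *\<^sub>R (y + w)"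
      using yw t(1) by simp
    ultimately show "x \<in> {x \<in> (\<lambda>y. (1/t) *\<^sub>R y) ` (\<lambda>x. x + w) ` P. int_vec x}"
      using v by blast
  qed
  then show ?thesis
    unfolding ehrhart_def by simp
qed

lemma lattice_lines_Int_eq_if_ehrhart_translates_eq:
  fixes P Q :: "(real^'n) set"
  assumes "bounded P" "bounded Q"
    and ehrhart_eq: "\<And>w s. int_vec w \<Longrightarrow> s > 0 \<Longrightarrow>
           ehrhart ((\<lambda>x. x + w) ` P) s = ehrhart ((\<lambda>x. x + w) ` Q) s"
  shows "P \<inter> lattice_lines = Q \<inter> lattice_lines"
proof -
  have "bounded (P \<union> Q)"
    using assms(1,2) by simp
  then obtain R where R: "\<forall>p\<in>P \<union> Q. norm p \<le> R"
    unfolding bounded_iff by blast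
  have "y \<in> P \<longleftrightarrow> y \<in> Q" if lattice: "y \<in> lattice_lines" for y
  proof -
    obtain r v z where v: "int_vec v" and z: "int_vec z" and y: "y = r *\<^sub>R v + z"
      using lattice unfolding lattice_lines_def by blast
    obtain M :: nat where M: "\<bar>R\<bar> + norm y + \<bar>r\<bar> < real M"
      using reals_Archimedean2 by blast
    define t where "t = r + real M"
    define w where "w = real M *\<^sub>R v - z"
    have t: "t > 0" "t > R + norm y"
      using M abs_ge_self[of R] abs_ge_minus_self[of r] norm_ge_zero[of y]
      unfolding t_def by linarith+
    have w: "int_vec w"
      unfolding w_def by (intro int_vec_diff int_vec_scaleR_of_nat v z)
    have yw: "y + w = t *\<^sub>R v"
      unfolding t_def w_def y by (simp add: algebra_simps)
    have "ehrhart ((\<lambda>x. x + w) ` P) (1/t) = ehrhart ((\<lambda>x. x + w) ` Q) (1/t)"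
      by (rule ehrhart_eq[OF w]) (use t in simp)
    moreover have "ehrhart ((\<lambda>x. x + w) ` P) (1/t) = (if y \<in> P then 1 else 0)"
      by (rule ehrhart_translate_point[OF _ v t yw]) (use R in blast)
    moreover have "ehrhart ((\<lambda>x. x + w) ` Q) (1/t) = (if y \<in> Q then 1 else 0)"
      by (rule ehrhart_translate_point[OF _ v t yw]) (use R in blast)
    ultimately show ?thesis
      by (cases "y \<in> P"; cases "y \<in> Q") simp_all
  qed
  then show ?thesis
    by blast
qed

lemma floor_scaled_tendsto: "(\<lambda>N. real_of_int \<lfloor>real N * a\<rfloor> / real N) \<longlonglongrightarrow> a"
proof (rule tendsto_sandwich)
  show "\<forall>\<^sub>F N in sequentially. a - 1 / real N \<le> real_of_int \<lfloor>real N * a\<rfloor> / real N"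
    using eventually_gt_at_top[of 0]
  proof eventually_elim
    case (elim N)
    have "a - 1 / real N = (real N * a - 1) / real N"
      using elim by (simp add: field_simps)
    also have "\<dots> \<le> real_of_int \<lfloor>real N * a\<rfloor> / real N"
      by (rule divide_right_mono) linarith+
    finally show ?case .
  qed
  show "\<forall>\<^sub>F N in sequentially. real_of_int \<lfloor>real N * a\<rfloor> / real N \<le> a"
    using eventually_gt_at_top[of 0]
    by eventually_elim (simp add: field_simps)
  show "(\<lambda>N. a - 1 / real N) \<longlonglongrightarrow> a"
    by (intro tendsto_eq_intros lim_const_over_n) auto
qed auto

lemma scaled_floor_vec_tendsto:
  fixes x :: "real^'n"
  shows "(\<lambda>N. (1 / real N) *\<^sub>R (\<chi> i. real_of_int \<lfloor>real N * x $ i\<rfloor>)) \<longlonglongrightarrow> x"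
  by (rule vec_tendstoI) (simp add: floor_scaled_tendsto)

lemma closure_lattice_lines: "closure (lattice_lines :: (real^'n) set) = UNIV"
proof -
  have "(1 / real N) *\<^sub>R (\<chi> i. real_of_int (f i)) \<in> lattice_lines" for N f
    using lattice_lines_of_int[of 0] by (simp add: int_vec_def)
  then have "x \<in> closure lattice_lines" for x :: "real^'n"
    unfolding closure_sequential
    by (intro exI[of _ "\<lambda>N. (1 / real N) *\<^sub>R (\<chi> i. real_of_int \<lfloor>real N * x $ i\<rfloor>)"]
        conjI allI scaled_floor_vec_tendsto)
  then show ?thesis
    by blast
qed

lemma int_vec_off_hyperplane:
  fixes c :: "real^'n"
  assumes "c \<noteq> 0"
  obtains z where "int_vec z" "c \<bullet> z \<noteq> \<beta>"
proof (cases "\<beta> = 0")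
  case False
  then show ?thesis
    using that[of 0] by (simp add: int_vec_def)
next
  case True
  obtain i where "c $ i \<noteq> 0"
    using assms by (metis vec_eq_iff zero_index)
  moreover have "int_vec (axis i 1 :: real^'n)"
    by (simp add: int_vec_def axis_def)
  ultimately show ?thesis
    using that[of "axis i 1"] True by (simp add: inner_axis)
qed

lemma hyperplane_subset_closure_lattice_lines:
  fixes c :: "real^'n"
  assumes "c \<noteq> 0"
  shows "{x. c \<bullet> x = \<beta>} \<subseteq> closure (lattice_lines \<inter> {x. c \<bullet> x = \<beta>})"
proof
  fix p assume p: "p \<in> {x. c \<bullet> x = \<beta>}"
  obtain z where z: "int_vec z" "c \<bullet> z \<noteq> \<beta>"
    using int_vec_off_hyperplane[OF assms] by blast
  define \<gamma> where "\<gamma> = c \<bullet> (p - z)"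
  have \<gamma>: "\<gamma> \<noteq> 0"
    using p z(2) by (simp add: \<gamma>_def inner_diff_right)
  define u where "u N = (1 / real N) *\<^sub>R (\<chi> i. real_of_int \<lfloor>real N * (p - z) $ i\<rfloor>)" for N
  have u: "u \<longlonglongrightarrow> p - z"
    unfolding u_def by (rule scaled_floor_vec_tendsto)
  have cu: "(\<lambda>N. c \<bullet> u N) \<longlonglongrightarrow> \<gamma>"
    unfolding \<gamma>_def by (intro tendsto_intros u)
  \<comment> \<open>the central projection of the rational point \<open>z + u N\<close> from \<open>z\<close> onto the hyperplane\<close>
  define q where "q N = z + (\<gamma> / (c \<bullet> u N)) *\<^sub>R u N" for N
  have "q \<longlonglongrightarrow> z + (\<gamma> / \<gamma>) *\<^sub>R (p - z)"
    unfolding q_def by (intro tendsto_intros cu u \<gamma>)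
  then have q: "q \<longlonglongrightarrow> p"
    using \<gamma> by simp
  have "\<forall>\<^sub>F N in sequentially. q N \<in> lattice_lines \<inter> {x. c \<bullet> x = \<beta>}"
    using tendsto_imp_eventually_ne[OF cu \<gamma>]
  proof eventually_elim
    case (elim N)
    have "q N \<in> lattice_lines"
      unfolding q_def u_def scaleR_scaleR by (rule lattice_lines_of_int[OF z(1)])
    moreover have "c \<bullet> q N = \<beta>"
      using elim p by (simp add: q_def inner_add_right \<gamma>_def inner_diff_right)
    ultimately show ?case
      by simp
  qed
  then show "p \<in> closure (lattice_lines \<inter> {x. c \<bullet> x = \<beta>})"
    by (rule Lim_in_closed_set[OF closed_closure eventually_mono _ q])
       (auto intro: closure_subset[THEN subsetD])
qed

lemma affine_hull_subset_closure_lattice_lines: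
  fixes S :: "(real^'n) set"
  assumes "aff_dim S \<ge> int CARD('n) - 1"
  shows "affine hull S \<subseteq> closure (lattice_lines \<inter> affine hull S)"
proof -
  have "aff_dim S = int CARD('n) \<or> aff_dim S = int CARD('n) - 1"
    using assms aff_dim_le_DIM[of S] by auto
  then show ?thesis
  proof
    assume "aff_dim S = int CARD('n)"
    then show ?thesis
      using aff_dim_eq_full[of S] by (simp add: closure_lattice_lines)
  next
    assume "aff_dim S = int CARD('n) - 1"
    then obtain c \<beta> where "c \<noteq> 0" "affine hull S = {x. c \<bullet> x = \<beta>}"
      using aff_dim_eq_hyperplane[of S] by auto
    then show ?thesis
      using hyperplane_subset_closure_lattice_lines by simp
  qed
qed

lemma closure_convex_Int_dense_in_affine_hull:
  fixes S :: "'a::euclidean_space set"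
  assumes "convex S" and dense: "affine hull S \<subseteq> closure (T \<inter> affine hull S)"
  shows "closure (S \<inter> T) = closure S"
proof
  show "closure (S \<inter> T) \<subseteq> closure S"
    by (simp add: closure_mono)
  have "rel_interior S \<subseteq> closure (S \<inter> T)"
  proof
    fix p assume "p \<in> rel_interior S"
    then obtain e where e: "e > 0" "ball p e \<inter> affine hull S \<subseteq> S" and "p \<in> S"
      using mem_rel_interior_ball by blast
    have "p \<in> closure (T \<inter> affine hull S)"
      using dense hull_inc[OF \<open>p \<in> S\<close>] by blast
    have "\<exists>q\<in>S \<inter> T. dist q p < \<epsilon>" if "\<epsilon> > 0" for \<epsilon>
    proof -
      have "min e \<epsilon> > 0"
        using e(1) that by simp
      then obtain q where q: "q \<in> T \<inter> affine hull S" "dist q p < min e \<epsilon>"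
        using \<open>p \<in> closure (T \<inter> affine hull S)\<close> unfolding closure_approachable by blast
      then have "q \<in> ball p e"
        by (simp add: dist_commute)
      then have "q \<in> S"
        using e(2) q(1) by blast
      then show ?thesis
        using q by auto
    qed
    then show "p \<in> closure (S \<inter> T)"
      by (simp add: closure_approachable)
  qed
  then have "closure (rel_interior S) \<subseteq> closure (S \<inter> T)"
    by (rule closure_minimal[OF _ closed_closure])
  then show "closure S \<subseteq> closure (S \<inter> T)"
    using convex_closure_rel_interior[OF assms(1)] by simp
qed

lemma closure_Int_lattice_lines:
  fixes S :: "(real^'n) set"
  assumes "convex S" "closed S" "aff_dim S \<ge> int CARD('n) - 1"
  shows "closure (S \<inter> lattice_lines) = S"
  using closure_convex_Int_dense_in_affine_hull[OF assms(1)
      affine_hull_subset_closure_lattice_lines[OF assms(3)]] assms(2)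
  by simp

lemma semi_rational_imp_polytope: "semi_rational P \<Longrightarrow> polytope P"
  unfolding semi_rational_def by (rule conjunct1)

theorem theorem4:
  fixes P Q :: "(real^'n) set"
  assumes "semi_rational P" and "semi_rational Q"
    and "codim P \<in> {0, 1}" and "codim Q \<in> {0, 1}"
    and "\<And>w s. int_vec w \<Longrightarrow> s > 0 \<Longrightarrow>
           ehrhart ((\<lambda>x. x + w) ` P) s = ehrhart ((\<lambda>x. x + w) ` Q) s"
  shows "P = Q"
proof -
  have closure_lattice_points: "closure (S \<inter> lattice_lines) = S"
    if "semi_rational S" "codim S \<in> {0, 1}" for S :: "(real^'n) set"
  proof (rule closure_Int_lattice_lines)
    show "convex S" "closed S"
      using semi_rational_imp_polytope[OF that(1)] polytope_imp_convex polytope_imp_closed by auto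
    show "aff_dim S \<ge> int CARD('n) - 1"
      using that(2) by (auto simp: codim_def)
  qed
  have "bounded P" "bounded Q"
    using assms(1,2) by (simp_all add: semi_rational_imp_polytope polytope_imp_bounded)
  then have "P \<inter> lattice_lines = Q \<inter> lattice_lines"
    using assms(5) by (rule lattice_lines_Int_eq_if_ehrhart_translates_eq)
  then have "closure (P \<inter> lattice_lines) = closure (Q \<inter> lattice_lines)"
    by simp
  then show ?thesis
    unfolding closure_lattice_points[OF assms(1,3)] closure_lattice_points[OF assms(2,4)] .
qed

end
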